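(* Let $\{e_j\}_{j=1}^d$ be a basis of $\mathbb C^d$ and let $x\in\mathbb C^d$ be full with respect to it, i.e. $\langle x,e_j\rangle\ne0$ for all $j$. Define the linear operator $T_x:\mathbb C^d\to\mathbb C^d$ by $$T_x=\sum_{j=1}^{d-1}\Big(|\langle x,e_j\rangle|^2\, e_j\otimes e_{j+1}^*-\langle e_j,x\rangle\langle x,e_{j+1}\rangle\, e_j\otimes e_j^*\Big).$$ Then the null space of $T_x$ is exactly $\{cx: c\in\mathbb C\}$.
   Context: $\mathbb C^d$ carries the standard inner product $\langle u,v\rangle=\sum_k u_k\overline{v_k}$. For a basis vector $e_j$, $e_j^*$ denotes the linear functional $y\mapsto\langle y,e_j\rangle$, and for $u\in\mathbb C^d$ and a linear functional $\varphi$, $u\otimes\varphi$ is the operator $y\mapsto\varphi(y)u$. *)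

theory Defs
  imports "HOL-Analysis.Analysis"
begin

text \<open>C^d is modelled as complex ^ 'n with d = CARD('n). Standard inner product
  <u,v> = sum_k u_k * conj(v_k).\<close>
definition cinner :: "complex ^ 'n \<Rightarrow> complex ^ 'n \<Rightarrow> complex" where
  "cinner u v = (\<Sum>k\<in>UNIV. u $ k * cnj (v $ k))"

text \<open>u (x) phi applied to y: phi(y) u, with e_j^* y = <y, e_j>.
  T_x y = sum_{j=1}^{d-1} ( |<x,e_j>|^2 <y,e_{j+1}> e_j - <e_j,x><x,e_{j+1}> <y,e_j> e_j ).\<close>
definition T_op :: "(nat \<Rightarrow> complex ^ 'n) \<Rightarrow> complex ^ 'n \<Rightarrow> complex ^ 'n \<Rightarrow> complex ^ 'n" where
  "T_op e x y = (\<Sum>j\<in>{1..<CARD('n)}.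
      ((complex_of_real ((cmod (cinner x (e j)))\<^sup>2) * cinner y (e (j+1))) *s e j)
    - ((cinner (e j) x * cinner x (e (j+1)) * cinner y (e j)) *s e j))"

end

theory Submission
  imports Defs
begin

text \<open>Write a_j = <x,e_j> and b_j = <y,e_j>. In the basis (e_j), the e_j-coefficient of
  T_x y is conj(a_j) (a_j b_{j+1} - a_{j+1} b_j). By independence all these coefficients
  vanish, and since every a_j is nonzero the consecutive ratios b_j / a_j agree, i.e. b = c a.
  Hence y - c x is orthogonal to a spanning set and therefore zero.\<close>

lemma cinner_commute: "cinner u v = cnj (cinner v u)"
  unfolding cinner_def by (simp add: mult.commute)

lemma cinner_scale_left: "cinner (c *s u) v = c * cinner u v"
  unfolding cinner_def by (simp add: algebra_simps sum_distrib_left)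

lemma cinner_diff_left: "cinner (u - w) v = cinner u v - cinner w v"
  unfolding cinner_def by (simp add: algebra_simps sum_subtractf)

lemma cinner_self_eq_0_iff: "cinner z z = 0 \<longleftrightarrow> z = 0"
proof -
  have "cinner z z = of_real (\<Sum>k\<in>UNIV. (cmod (z $ k))\<^sup>2)"
    unfolding cinner_def of_real_sum complex_norm_square by simp
  then have "cinner z z = 0 \<longleftrightarrow> (\<forall>k. (cmod (z $ k))\<^sup>2 = 0)"
    by (simp add: sum_nonneg_eq_0_iff del: of_real_sum)
  then show ?thesis by (simp add: vec_eq_iff)
qed

lemma subspace_cinner_eq_0: "vec.subspace {w. cinner z w = 0}"
  unfolding vec.subspace_def cinner_def
  by (auto simp: algebra_simps sum.distrib simp flip: sum_distrib_left)

lemma orthogonal_spanning_eq_0: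
  assumes span: "vec.span B = UNIV" and orth: "\<forall>b\<in>B. cinner z b = 0"
  shows "z = 0"
proof -
  have "z \<in> vec.span B" using span by simp
  then have "cinner z z = 0"
    by (rule vec.span_induct[where P = "\<lambda>w. cinner z w = 0"])
       (use orth subspace_cinner_eq_0 in auto)
  then show ?thesis by (simp add: cinner_self_eq_0_iff)
qed

lemma independent_sum_coeff_eq_0:
  fixes e :: "'i \<Rightarrow> complex ^ 'n"
  assumes inj: "inj_on e A" and indep: "vec.independent (e ` A)"
    and J: "J \<subseteq> A" "finite J"
    and sum_eq_0: "(\<Sum>i\<in>J. c i *s e i) = 0" and i: "i \<in> J"
  shows "c i = 0"
proof -
  have injJ: "inj_on e J" using inj J inj_on_subset by blast
  let ?u = "\<lambda>v. c (the_inv_into J e v)"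
  have "(\<Sum>v\<in>e ` J. ?u v *s v) = (\<Sum>i\<in>J. c i *s e i)"
    by (simp add: sum.reindex[OF injJ] the_inv_into_f_f[OF injJ])
  then have "?u (e i) = 0"
    using vec.independentD[OF indep, of "e ` J" ?u "e i"] J i sum_eq_0 by auto
  then show ?thesis by (simp add: the_inv_into_f_f[OF injJ i])
qed

lemma proportional_if_cross_products_eq:
  fixes a b :: "nat \<Rightarrow> 'a :: field"
  assumes nz: "\<And>j. m \<le> j \<Longrightarrow> j \<le> n \<Longrightarrow> a j \<noteq> 0"
    and cross: "\<And>j. m \<le> j \<Longrightarrow> j < n \<Longrightarrow> a j * b (j + 1) = a (j + 1) * b j"
    and j: "m \<le> j" "j \<le> n"
  shows "b j = b m / a m * a j"
  using j
proof (induction j rule: dec_induct)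
  case base
  then show ?case using nz[of m] by simp
next
  case (step k)
  have "a k * b (k + 1) = a (k + 1) * b k" using cross step by simp
  also have "\<dots> = a k * (b m / a m * a (k + 1))" using step by simp
  finally have "a k * b (k + 1) = a k * (b m / a m * a (k + 1))" .
  moreover have "a k \<noteq> 0" using nz step by simp
  ultimately show ?case by (metis Suc_eq_plus1 mult_left_cancel)
qed

lemma T_op_eq_coeff_sum:
  "T_op e x y = (\<Sum>j\<in>{1..<CARD('n)}.
      (cnj (cinner x (e j)) * (cinner x (e j) * cinner y (e (j + 1))
        - cinner x (e (j + 1)) * cinner y (e j))) *s e j)"
  for e :: "nat \<Rightarrow> complex ^ 'n"
  unfolding T_op_def complex_norm_square vector_sub_rdistrib[symmetric]
  by (rule sum.cong) (simp_all add: cinner_commute[of "e _" x] algebra_simps)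

lemma T_op_scale_self: "T_op e x (c *s x) = 0"
  by (simp add: T_op_eq_coeff_sum cinner_scale_left algebra_simps)

theorem mainTheorem3:
  fixes e :: "nat \<Rightarrow> complex ^ 'n" and x :: "complex ^ 'n"
  assumes inj: "inj_on e {1..CARD('n)}"
    and indep: "vec.independent (e ` {1..CARD('n)})"
    and span: "vec.span (e ` {1..CARD('n)}) = UNIV"
    and full: "\<forall>j\<in>{1..CARD('n)}. cinner x (e j) \<noteq> 0"
  shows "{y. T_op e x y = 0} = {c *s x | c. True}"
proof (intro set_eqI iffI)
  fix y assume "y \<in> {y. T_op e x y = 0}"
  define a where "a j = cinner x (e j)" for j
  define b where "b j = cinner y (e j)" for j
  have coeff_sum:
    "(\<Sum>j\<in>{1..<CARD('n)}. (cnj (a j) * (a j * b (j + 1) - a (j + 1) * b j)) *s e j) = 0"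
    using \<open>y \<in> _\<close> by (simp add: T_op_eq_coeff_sum a_def b_def)
  have coeff_eq_0: "cnj (a j) * (a j * b (j + 1) - a (j + 1) * b j) = 0"
    if "j \<in> {1..<CARD('n)}" for j
    by (rule independent_sum_coeff_eq_0[OF inj indep _ _ coeff_sum that]) auto
  have nonzero: "a j \<noteq> 0" if "1 \<le> j" "j \<le> CARD('n)" for j
    using full that by (simp add: a_def)
  have cross: "a j * b (j + 1) = a (j + 1) * b j" if "1 \<le> j" "j < CARD('n)" for j
    using coeff_eq_0[of j] nonzero[of j] that by simp
  define c where "c = b 1 / a 1"
  have "b j = c * a j" if "j \<in> {1..CARD('n)}" for j
    unfolding c_def
    using proportional_if_cross_products_eq[of 1 "CARD('n)" a b j, OF nonzero cross] that
    by simp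
  then have "\<forall>w\<in>e ` {1..CARD('n)}. cinner (y - c *s x) w = 0"
    by (auto simp: cinner_diff_left cinner_scale_left a_def b_def)
  then have "y - c *s x = 0" by (rule orthogonal_spanning_eq_0[OF span])
  then show "y \<in> {c *s x | c. True}" by auto
qed (auto simp: T_op_scale_self)

end
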